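(* In the setting below, with $Q=L/\mu$, suppose $0<\eta\le\frac{1}{L(K+1)}$, let $a\ge2$ be an integer and set $\epsilon_i=2\eta L(\eta KL)^{i-1}$ for $i\ge 1$. Then for every integer $k\ge aK+1$, \[ \Big(1+\eta\frac{\mu}{8}\Big)F_{k+1}\le\Big(1-\sum_{i=1}^{a-1}\epsilon_i\Big)F_k+\sum_{i=1}^{a-1}\epsilon_i F_{k-iK}+4KQ\,\epsilon_{a-1}\sum_{j=k-aK}^{k}F_j . \]
   Context: Let $m,n\ge 1$ be integers and $\|\cdot\|$ the Euclidean norm on $\mathbb{R}^n$. For $i=1,\dots,m$, let $f_i:\mathbb{R}^n\to\mathbb{R}$ be continuously differentiable with $\|\nabla f_i(x)-\nabla f_i(y)\|\le L_i\|x-y\|$ for all $x,y$, where $L_i\ge 0$ (the $f_i$ are not assumed convex). Let $f=\frac1m\sum_{i=1}^m f_i$ and $L=\frac1m\sum_{i=1}^m L_i$. Assume $f$ is $\mu$-strongly convex for some $\mu>0$ (i.e. $x\mapsto f(x)-\frac{\mu}{2}\|x\|^2$ is convex). Let $r:\mathbb{R}^n\to(-\infty,\infty]$ be proper, closed and convex, let $F=f+r$, and let $x^*$ be the unique minimizer of $F$. For $\eta>0$ define $\mathrm{prox}_r^\eta(y)=\arg\min_{x\in\mathbb{R}^n}\{\frac12\|x-y\|^2+\eta r(x)\}$. PIAG method: fix an integer $K\ge 0$, a step size $\eta>0$ and $x_0\in\mathbb{R}^n$; for each $k\ge0$ and each $i$ let $\tau_{i,k}$ be any (deterministically chosen) integer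 with $\max(k-K,0)\le\tau_{i,k}\le k$; set $g_k=\frac1m\sum_{i=1}^m\nabla f_i(x_{\tau_{i,k}})$ and $x_{k+1}=\mathrm{prox}_r^\eta(x_k-\eta g_k)$. Define $F_k=F(x_k)-F(x^* )$. *)

theory Defs
  imports "HOL-Analysis.Analysis"
begin

definition proper_closed_convex :: "('a::real_normed_vector \<Rightarrow> ereal) \<Rightarrow> bool" where
  "proper_closed_convex r \<longleftrightarrow>
     (\<forall>x. r x \<noteq> -\<infinity>) \<and> (\<exists>x. r x \<noteq> \<infinity>) \<and>
     convex {(x, t::real). r x \<le> ereal t} \<and> closed {(x, t::real). r x \<le> ereal t}"

definition is_prox :: "('a::real_normed_vector \<Rightarrow> ereal) \<Rightarrow> real \<Rightarrow> 'a \<Rightarrow> 'a \<Rightarrow> bool" where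
  "is_prox r \<eta> v y \<longleftrightarrow>
     (\<forall>x. ereal (norm (y - v)^2 / 2) + ereal \<eta> * r y \<le> ereal (norm (x - v)^2 / 2) + ereal \<eta> * r x)"

end

theory Submission
  imports Defs
begin

text \<open>Each PIAG step is a proximal gradient step whose gradient is at most K iterations stale,
  and the staleness error is controlled by the lengths of the last K steps. The proximal
  optimality condition then gives sufficient decrease: F_j - F_{j+1} is at least the squared step
  over 2\<eta> minus L/2 times the energy of the preceding K steps. Combined with strong convexity
  it also gives the contraction (1 + \<eta>\<mu>/8) F_{k+1} \<le> F_k + L times that energy. Summing the
  decrease estimate over windows of iK steps and weighting by \<epsilon>_i, the energies of consecutive
  windows cancel, and the energy of the remaining window of aK steps is bounded through the
  quadratic growth \<mu>/2 ||x_j - x*||^2 \<le> F_j.\<close>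

lemma nonpos_if_le_scaled:
  fixes c d :: real
  assumes "\<And>t. 0 < t \<Longrightarrow> t < 1 \<Longrightarrow> c \<le> t * d"
  shows "c \<le> 0"
proof (rule field_le_epsilon)
  fix e :: real assume "0 < e"
  define t where "t = min (1/2) (e / (\<bar>d\<bar> + 1))"
  have t: "0 < t" "t < 1" using \<open>0 < e\<close> by (auto simp: t_def)
  have "t * d \<le> t * \<bar>d\<bar>" using t by (simp add: mult_left_mono)
  also have "\<dots> \<le> e / (\<bar>d\<bar> + 1) * (\<bar>d\<bar> + 1)"
    using t by (intro mult_mono) (auto simp: t_def)
  finally show "c \<le> 0 + e" using assms[OF t] by simp
qed

lemma square_sum_le:
  fixes a b :: real
  shows "(a + b)^2 \<le> 2 * a^2 + 2 * b^2"
proof -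
  have "0 \<le> (a - b)^2" by simp
  thus ?thesis by (simp add: power2_eq_square algebra_simps)
qed

lemma norm_convex_combination_sq:
  fixes a b :: "'a::real_inner"
  shows "norm ((1-t) *\<^sub>R a + t *\<^sub>R b) ^ 2
     = (1-t) * norm a ^ 2 + t * norm b ^ 2 - t * (1-t) * norm (a - b) ^ 2"
  by (simp add: power2_norm_eq_inner inner_add_left inner_add_right inner_diff_left inner_diff_right
      inner_commute algebra_simps)

lemma norm_add_scaleR_sq:
  fixes u w :: "'a::real_inner"
  shows "norm (u + t *\<^sub>R w) ^ 2 = norm u ^ 2 + 2 * t * (u \<bullet> w) + t^2 * norm w ^ 2"
  unfolding power2_norm_eq_inner
  by (simp add: inner_add_left inner_add_right inner_commute power2_eq_square algebra_simps)

lemma sum_sliding_window_le: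
  fixes E :: "nat \<Rightarrow> real"
  assumes E: "\<And>l. 0 \<le> E l"
  shows "(\<Sum>j\<in>{p..<q}. \<Sum>l\<in>{j-K..<j}. E l) \<le> real K * (\<Sum>l\<in>{p-K..<q}. E l)"
proof -
  have "(\<Sum>j\<in>{p..<q}. \<Sum>l\<in>{j-K..<j}. E l)
      = (\<Sum>j\<in>{p..<q}. \<Sum>l\<in>{l\<in>{p-K..<q}. j-K \<le> l \<and> l < j}. E l)"
    by (intro sum.cong refl arg_cong2[where f=sum]) auto
  also have "\<dots> = (\<Sum>l\<in>{p-K..<q}. \<Sum>j\<in>{j\<in>{p..<q}. j-K \<le> l \<and> l < j}. E l)"
    by (rule sum.swap_restrict) auto
  also have "\<dots> = (\<Sum>l\<in>{p-K..<q}. real (card {j\<in>{p..<q}. j-K \<le> l \<and> l < j}) * E l)"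
    by simp
  also have "\<dots> \<le> (\<Sum>l\<in>{p-K..<q}. real K * E l)"
  proof (rule sum_mono)
    fix l
    have "{j\<in>{p..<q}. j-K \<le> l \<and> l < j} \<subseteq> {Suc l..<Suc l + K}" by auto
    hence "card {j\<in>{p..<q}. j-K \<le> l \<and> l < j} \<le> K"
      by (metis card_atLeastLessThan card_mono diff_add_inverse finite_atLeastLessThan)
    thus "real (card {j\<in>{p..<q}. j-K \<le> l \<and> l < j}) * E l \<le> real K * E l"
      using E[of l] by (intro mult_right_mono) auto
  qed
  finally show ?thesis by (simp add: sum_distrib_left)
qed

lemma norm_diff_le_recent_steps:
  fixes x :: "nat \<Rightarrow> 'a::real_normed_vector"
  assumes "j - K \<le> t" "t \<le> j"
  shows "norm (x j - x t) \<le> (\<Sum>l\<in>{j-K..<j}. norm (x (Suc l) - x l))"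
proof -
  have "norm (x j - x t) = norm (\<Sum>l = t..<j. x (Suc l) - x l)"
    using assms by (simp add: sum_Suc_diff')
  also have "\<dots> \<le> (\<Sum>l = t..<j. norm (x (Suc l) - x l))" by (rule norm_sum)
  also have "\<dots> \<le> (\<Sum>l\<in>{j-K..<j}. norm (x (Suc l) - x l))"
    by (rule sum_mono2) (use assms in auto)
  finally show ?thesis .
qed

lemma has_derivative_average:
  assumes "\<And>i. i \<in> I \<Longrightarrow> (\<phi> i has_derivative (\<lambda>h. D i \<bullet> h)) (at y)"
  shows "((\<lambda>y. (\<Sum>i\<in>I. \<phi> i y) / real (card I))
           has_derivative (\<lambda>h. ((\<Sum>i\<in>I. D i) /\<^sub>R real (card I)) \<bullet> h)) (at y)"
proof -
  have "((\<lambda>y. inverse (real (card I)) * (\<Sum>i\<in>I. \<phi> i y))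
          has_derivative (\<lambda>h. inverse (real (card I)) * (\<Sum>i\<in>I. D i \<bullet> h))) (at y)"
    by (intro has_derivative_mult_right has_derivative_sum assms)
  thus ?thesis by (simp add: field_simps inner_sum_left)
qed

lemma norm_average_diff_le:
  fixes u v :: "'i \<Rightarrow> 'a::real_normed_vector"
  assumes "\<And>i. i \<in> I \<Longrightarrow> norm (u i - v i) \<le> c i * d"
  shows "norm ((\<Sum>i\<in>I. u i) /\<^sub>R real (card I) - (\<Sum>i\<in>I. v i) /\<^sub>R real (card I))
           \<le> (\<Sum>i\<in>I. c i) / real (card I) * d"
proof -
  have "norm ((\<Sum>i\<in>I. u i) /\<^sub>R real (card I) - (\<Sum>i\<in>I. v i) /\<^sub>R real (card I))
      = norm (\<Sum>i\<in>I. u i - v i) / real (card I)"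
    by (simp add: sum_subtractf flip: scaleR_diff_right) (simp add: divide_inverse_commute)
  also have "\<dots> \<le> (\<Sum>i\<in>I. c i * d) / real (card I)"
    by (intro divide_right_mono order.trans[OF norm_sum] sum_mono assms) auto
  finally show ?thesis by (simp add: sum_distrib_right)
qed

lemma norm_delayed_average_diff_le:
  fixes x :: "nat \<Rightarrow> 'a::real_normed_vector"
  assumes lip: "\<And>i y z. i \<in> I \<Longrightarrow> norm (D i y - D i z) \<le> c i * norm (y - z)"
    and c_nonneg: "\<And>i. i \<in> I \<Longrightarrow> 0 \<le> c i"
    and delay: "\<And>i. i \<in> I \<Longrightarrow> j - K \<le> \<tau> i \<and> \<tau> i \<le> j"
  shows "norm ((\<Sum>i\<in>I. D i (x (\<tau> i))) /\<^sub>R real (card I) - (\<Sum>i\<in>I. D i u) /\<^sub>R real (card I))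
           \<le> (\<Sum>i\<in>I. c i) / real (card I) * ((\<Sum>l\<in>{j-K..<j}. norm (x (Suc l) - x l)) + norm (x j - u))"
proof (rule norm_average_diff_le)
  fix i assume i: "i \<in> I"
  have "norm (x (\<tau> i) - u) \<le> norm (x j - x (\<tau> i)) + norm (x j - u)"
    by (rule norm_diff_triangle_le[of _ "x j"]) (auto simp: norm_minus_commute)
  also have "\<dots> \<le> (\<Sum>l\<in>{j-K..<j}. norm (x (Suc l) - x l)) + norm (x j - u)"
    using delay[OF i] by (simp add: norm_diff_le_recent_steps)
  finally show "norm (D i (x (\<tau> i)) - D i u)
                  \<le> c i * ((\<Sum>l\<in>{j-K..<j}. norm (x (Suc l) - x l)) + norm (x j - u))"
    using lip[OF i] c_nonneg[OF i] by (meson mult_left_mono order.trans)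
qed

lemma lipschitz_gradient_upper_bound:
  fixes \<phi> :: "'a::real_inner \<Rightarrow> real"
  assumes der: "\<And>y. (\<phi> has_derivative (\<lambda>h. G y \<bullet> h)) (at y)"
    and lip: "\<And>y z. norm (G y - G z) \<le> M * norm (y - z)"
  shows "\<phi> y \<le> \<phi> z + G z \<bullet> (y - z) + M / 2 * norm (y - z) ^ 2"
proof -
  define h where "h = y - z"
  define \<psi> where "\<psi> t = \<phi> (z + t *\<^sub>R h) - t * (G z \<bullet> h) - M/2 * t^2 * norm h ^ 2" for t
  have line: "((\<lambda>t. \<phi> (z + t *\<^sub>R h)) has_real_derivative (G (z + t *\<^sub>R h) \<bullet> h)) (at t)" for t
  proof -
    have "((\<lambda>t. z + t *\<^sub>R h) has_derivative (\<lambda>s. s *\<^sub>R h)) (at t)"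
      by (auto intro!: derivative_eq_intros)
    from has_derivative_compose[OF this der]
    have "((\<lambda>t. \<phi> (z + t *\<^sub>R h)) has_derivative (\<lambda>s. s * (G (z + t *\<^sub>R h) \<bullet> h))) (at t)"
      by simp
    thus ?thesis by (simp add: has_field_derivative_def mult_commute_abs)
  qed
  have "\<psi> 1 \<le> \<psi> 0"
  proof (rule DERIV_nonpos_imp_nonincreasing[of 0 1])
    fix t :: real assume t: "0 \<le> t" "t \<le> 1"
    have "(G (z + t *\<^sub>R h) - G z) \<bullet> h \<le> norm (G (z + t *\<^sub>R h) - G z) * norm h"
      by (rule norm_cauchy_schwarz)
    also have "\<dots> \<le> M * norm (t *\<^sub>R h) * norm h"
      using lip[of "z + t *\<^sub>R h" z] by (intro mult_right_mono) auto
    finally have "G (z + t *\<^sub>R h) \<bullet> h - G z \<bullet> h - M * t * norm h ^ 2 \<le> 0"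
      using t by (simp add: inner_diff_left power2_eq_square mult.assoc)
    moreover have "(\<psi> has_real_derivative (G (z + t *\<^sub>R h) \<bullet> h - G z \<bullet> h - M * t * norm h ^ 2)) (at t)"
      unfolding \<psi>_def by (rule derivative_eq_intros line refl | simp)+
    ultimately show "\<exists>y. (\<psi> has_real_derivative y) (at t) \<and> y \<le> 0" by blast
  qed simp
  thus ?thesis by (simp add: \<psi>_def h_def)
qed

lemma lipschitz_gradient_lower_bound:
  fixes \<phi> :: "'a::real_inner \<Rightarrow> real"
  assumes der: "\<And>y. (\<phi> has_derivative (\<lambda>h. G y \<bullet> h)) (at y)"
    and lip: "\<And>y z. norm (G y - G z) \<le> M * norm (y - z)"
  shows "\<phi> z + G z \<bullet> (y - z) - M / 2 * norm (y - z) ^ 2 \<le> \<phi> y"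
proof -
  have "((\<lambda>y. - \<phi> y) has_derivative (\<lambda>h. - G y \<bullet> h)) (at y)" for y
    using has_derivative_minus[OF der[of y]] by simp
  moreover have "norm (- G y - - G z) \<le> M * norm (y - z)" for y z
    using lip[of y z] by (simp add: norm_minus_commute)
  ultimately have "- \<phi> y \<le> - \<phi> z + - G z \<bullet> (y - z) + M / 2 * norm (y - z) ^ 2"
    by (rule lipschitz_gradient_upper_bound)
  thus ?thesis by simp
qed

lemma strongly_convex_chord_le:
  fixes \<phi> :: "'a::real_inner \<Rightarrow> real"
  assumes cv: "convex_on UNIV (\<lambda>y. \<phi> y - \<mu> / 2 * norm y ^ 2)" and t: "0 \<le> t" "t \<le> 1"
  shows "\<phi> ((1-t) *\<^sub>R a + t *\<^sub>R b)
           \<le> (1-t) * \<phi> a + t * \<phi> b - \<mu>/2 * (t * (1-t) * norm (a - b) ^ 2)"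
  using convex_onD[OF cv t, of a b] unfolding norm_convex_combination_sq
  by (simp add: algebra_simps diff_divide_distrib)

lemma strongly_convex_gradient_ineq:
  fixes \<phi> :: "'a::real_inner \<Rightarrow> real"
  assumes cv: "convex_on UNIV (\<lambda>y. \<phi> y - \<mu> / 2 * norm y ^ 2)"
    and der: "\<And>y. (\<phi> has_derivative (\<lambda>h. G y \<bullet> h)) (at y)"
    and lip: "\<And>y z. norm (G y - G z) \<le> M * norm (y - z)"
  shows "\<phi> z + G z \<bullet> (w - z) + \<mu> / 2 * norm (w - z) ^ 2 \<le> \<phi> w"
proof -
  define N where "N = norm (w - z) ^ 2"
  have "\<phi> z + G z \<bullet> (w - z) + \<mu> / 2 * N - \<phi> w \<le> 0"
  proof (rule nonpos_if_le_scaled)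
    fix t :: real assume t: "0 < t" "t < 1"
    define q where "q = (1-t) *\<^sub>R z + t *\<^sub>R w"
    have qz: "q - z = t *\<^sub>R (w - z)" by (simp add: q_def algebra_simps)
    have "\<phi> q \<le> (1-t) * \<phi> z + t * \<phi> w - \<mu>/2 * (t * (1-t) * N)"
      using strongly_convex_chord_le[OF cv, of t z w] t unfolding q_def N_def
      by (simp add: norm_minus_commute[of z w])
    moreover have "\<phi> z + t * (G z \<bullet> (w - z)) - M / 2 * (t^2 * N) \<le> \<phi> q"
      using lipschitz_gradient_lower_bound[OF der lip, of z q]
      by (simp add: qz N_def power_mult_distrib)
    ultimately have "t * (\<phi> z + G z \<bullet> (w - z) + \<mu> / 2 * N - \<phi> w) \<le> t * (t * ((M + \<mu>) / 2 * N))"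
      by (simp add: algebra_simps power2_eq_square)
    thus "\<phi> z + G z \<bullet> (w - z) + \<mu> / 2 * N - \<phi> w \<le> t * ((M + \<mu>) / 2 * N)" using t by simp
  qed
  thus ?thesis by (simp add: N_def)
qed

lemma proper_closed_convex_chord_le:
  assumes pcc: "proper_closed_convex r" and u: "r u \<noteq> \<infinity>" and v: "r v \<noteq> \<infinity>"
    and t: "0 \<le> t" "t \<le> 1"
  shows "r ((1-t) *\<^sub>R u + t *\<^sub>R v) \<le> ereal ((1-t) * real_of_ereal (r u) + t * real_of_ereal (r v))"
proof -
  have cvx: "convex {(x, s::real). r x \<le> ereal s}" and ninf: "\<And>x. r x \<noteq> -\<infinity>"
    using pcc by (auto simp: proper_closed_convex_def)
  have "(u, real_of_ereal (r u)) \<in> {(x, s::real). r x \<le> ereal s}"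
    using u ninf[of u] by (cases "r u") auto
  moreover have "(v, real_of_ereal (r v)) \<in> {(x, s::real). r x \<le> ereal s}"
    using v ninf[of v] by (cases "r v") auto
  ultimately have "(1-t) *\<^sub>R (u, real_of_ereal (r u)) + t *\<^sub>R (v, real_of_ereal (r v))
                     \<in> {(x, s::real). r x \<le> ereal s}"
    using cvx t unfolding convex_def by (metis diff_add_cancel diff_ge_0_iff_ge)
  thus ?thesis by simp
qed

lemma is_prox_finite:
  assumes pcc: "proper_closed_convex r" and eta: "0 < \<eta>" and px: "is_prox r \<eta> v p"
  shows "r p = ereal (real_of_ereal (r p))"
proof -
  obtain w where w: "r w \<noteq> \<infinity>" and ninf: "\<And>x. r x \<noteq> -\<infinity>"
    using pcc by (auto simp: proper_closed_convex_def)
  have rw: "r w = ereal (real_of_ereal (r w))" using w ninf[of w] by (cases "r w") auto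
  have "ereal (norm (p - v)^2 / 2) + ereal \<eta> * r p
          \<le> ereal (norm (w - v)^2 / 2 + \<eta> * real_of_ereal (r w))"
    using px rw unfolding is_prox_def by (metis plus_ereal.simps(1) times_ereal.simps(1))
  hence "r p \<noteq> \<infinity>" using eta by auto
  thus ?thesis using ninf[of p] by (cases "r p") auto
qed

text \<open>Compare p with the points of the segment towards y and let them approach p.\<close>
lemma is_prox_variational_ineq:
  fixes r :: "'a::real_inner \<Rightarrow> ereal"
  assumes pcc: "proper_closed_convex r" and eta: "0 < \<eta>" and px: "is_prox r \<eta> v p"
    and y: "r y \<noteq> \<infinity>"
  shows "\<eta> * (real_of_ereal (r p) - real_of_ereal (r y)) \<le> (p - v) \<bullet> (y - p)"
proof -
  have rp: "r p = ereal (real_of_ereal (r p))" by (rule is_prox_finite[OF pcc eta px])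
  define N where "N = norm (y - p) ^ 2"
  have "\<eta> * (real_of_ereal (r p) - real_of_ereal (r y)) - (p - v) \<bullet> (y - p) \<le> 0"
  proof (rule nonpos_if_le_scaled)
    fix t :: real assume t: "0 < t" "t < 1"
    define z where "z = (1-t) *\<^sub>R p + t *\<^sub>R y"
    have rz: "r z \<le> ereal ((1-t) * real_of_ereal (r p) + t * real_of_ereal (r y))"
      unfolding z_def by (rule proper_closed_convex_chord_le[OF pcc _ y]) (use t rp in auto)
    have "ereal (norm (p - v)^2 / 2) + ereal \<eta> * r p \<le> ereal (norm (z - v)^2 / 2) + ereal \<eta> * r z"
      using px by (simp add: is_prox_def)
    also have "\<dots> \<le> ereal (norm (z - v)^2 / 2)
                    + ereal \<eta> * ereal ((1-t) * real_of_ereal (r p) + t * real_of_ereal (r y))"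
      using rz eta by (intro add_left_mono ereal_mult_left_mono) auto
    finally have "norm (p - v)^2 / 2 + \<eta> * real_of_ereal (r p)
        \<le> norm (z - v)^2 / 2 + \<eta> * ((1-t) * real_of_ereal (r p) + t * real_of_ereal (r y))"
      by (subst (asm) rp) simp
    moreover have "z - v = (p - v) + t *\<^sub>R (y - p)" by (simp add: z_def algebra_simps)
    hence "norm (z - v)^2 = norm (p - v)^2 + 2 * t * ((p - v) \<bullet> (y - p)) + t^2 * N"
      by (simp only: N_def norm_add_scaleR_sq)
    ultimately have "t * (\<eta> * (real_of_ereal (r p) - real_of_ereal (r y)) - (p - v) \<bullet> (y - p))
                       \<le> t * (t * (N/2))"
      by (simp add: algebra_simps power2_eq_square)
    thus "\<eta> * (real_of_ereal (r p) - real_of_ereal (r y)) - (p - v) \<bullet> (y - p) \<le> t * (N/2)"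
      using t by simp
  qed
  thus ?thesis by simp
qed

lemma strongly_convex_composite_growth:
  fixes f :: "'a::real_inner \<Rightarrow> real"
  assumes cv: "convex_on UNIV (\<lambda>y. f y - \<mu> / 2 * norm y ^ 2)" and pcc: "proper_closed_convex r"
    and min: "\<And>z. ereal (f xstar) + r xstar \<le> ereal (f z) + r z"
    and rstar: "r xstar = ereal s" and ry: "r y = ereal t"
  shows "\<mu> / 2 * norm (y - xstar) ^ 2 \<le> f y + t - (f xstar + s)"
proof -
  define N where "N = norm (xstar - y) ^ 2"
  have "\<mu> / 2 * N - (f y + t - (f xstar + s)) \<le> 0"
  proof (rule nonpos_if_le_scaled)
    fix \<theta> :: real assume \<theta>: "0 < \<theta>" "\<theta> < 1"
    define z where "z = (1-\<theta>) *\<^sub>R xstar + \<theta> *\<^sub>R y"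
    have fz: "f z \<le> (1-\<theta>) * f xstar + \<theta> * f y - \<mu>/2 * (\<theta> * (1-\<theta>) * N)"
      unfolding z_def N_def by (rule strongly_convex_chord_le[OF cv]) (use \<theta> in auto)
    have "r z \<le> ereal ((1-\<theta>) * s + \<theta> * t)"
      using proper_closed_convex_chord_le[OF pcc, of xstar y \<theta>] \<theta> rstar ry unfolding z_def by simp
    hence "ereal (f xstar + s) \<le> ereal (f z + ((1-\<theta>) * s + \<theta> * t))"
      using min[of z] rstar by (metis add_left_mono order.trans plus_ereal.simps(1))
    with fz have "\<theta> * (\<mu> / 2 * N - (f y + t - (f xstar + s))) \<le> \<theta> * (\<theta> * (\<mu> / 2 * N))"
      by (simp add: algebra_simps)
    thus "\<mu> / 2 * N - (f y + t - (f xstar + s)) \<le> \<theta> * (\<mu> / 2 * N)" using \<theta> by simp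
  qed
  thus ?thesis by (simp add: N_def norm_minus_commute)
qed

text \<open>The components f_i enter only through the averaged gradient G and the aggregated delayed
  gradient g; the assumption delayed_gradient_error is what the delay bound and the Lipschitz
  constants of the components provide.\<close>
locale piag =
  fixes f :: "'a::real_inner \<Rightarrow> real" and G :: "'a \<Rightarrow> 'a" and L \<mu> :: real
    and r :: "'a \<Rightarrow> ereal" and xstar :: 'a and K :: nat and \<eta> :: real
    and x g :: "nat \<Rightarrow> 'a"
  assumes f_deriv: "\<And>y. (f has_derivative (\<lambda>h. G y \<bullet> h)) (at y)"
    and G_lipschitz: "\<And>y z. norm (G y - G z) \<le> L * norm (y - z)"
    and f_strongly_convex: "convex_on UNIV (\<lambda>y. f y - \<mu> / 2 * norm y ^ 2)"
    and mu_pos: "0 < \<mu>"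
    and r_pcc: "proper_closed_convex r"
    and xstar_min: "\<And>y. ereal (f xstar) + r xstar \<le> ereal (f y) + r y"
    and prox_step: "\<And>j. is_prox r \<eta> (x j - \<eta> *\<^sub>R g j) (x (Suc j))"
    and delayed_gradient_error:
      "\<And>j u. norm (g j - G u) \<le> L * ((\<Sum>l\<in>{j-K..<j}. norm (x (Suc l) - x l)) + norm (x j - u))"
    and eta_pos: "0 < \<eta>"
    and step_size: "\<eta> * L * (real K + 1) \<le> 1"
    and L_nonneg: "0 \<le> L"
begin

text \<open>real_of_ereal maps \<infinity> to 0, and x 0 need not lie in the domain of r: facts about gap j
  therefore require 1 \<le> j.\<close>
definition gap :: "nat \<Rightarrow> real" where
  "gap j = real_of_ereal (ereal (f (x j)) + r (x j) - (ereal (f xstar) + r xstar))"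

definition recent_path :: "nat \<Rightarrow> real" where
  "recent_path j = (\<Sum>l\<in>{j-K..<j}. norm (x (Suc l) - x l))"

definition window_energy :: "nat \<Rightarrow> nat \<Rightarrow> real" where
  "window_energy n j = (\<Sum>l\<in>{j - n*K..<j}. norm (x (Suc l) - x l) ^ 2)"

definition weight :: "nat \<Rightarrow> real" where
  "weight i = 2 * \<eta> * L * (\<eta> * real K * L) ^ (i - 1)"

lemma eta_L_le_1: "\<eta> * L \<le> 1"
  and eta_K_L_le_1: "\<eta> * real K * L \<le> 1"
proof -
  have "0 \<le> \<eta> * real K * L" "0 \<le> \<eta> * L" using eta_pos L_nonneg by simp_all
  moreover have "\<eta> * L * (real K + 1) = \<eta> * real K * L + \<eta> * L" by (simp add: algebra_simps)
  ultimately show "\<eta> * L \<le> 1" "\<eta> * real K * L \<le> 1" using step_size by linarith+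
qed

lemma r_iterate_finite:
  assumes "1 \<le> j"
  shows "r (x j) = ereal (real_of_ereal (r (x j)))"
proof -
  obtain i where "j = Suc i" using assms by (cases j) auto
  thus ?thesis using is_prox_finite[OF r_pcc eta_pos prox_step[of i]] by simp
qed

lemma r_minimizer_finite: "r xstar = ereal (real_of_ereal (r xstar))"
proof -
  obtain t where "r (x 1) = ereal t" using r_iterate_finite[of 1] by blast
  hence "ereal (f xstar) + r xstar \<le> ereal (f (x 1) + t)" using xstar_min[of "x 1"] by simp
  hence "r xstar \<noteq> \<infinity>" by auto
  moreover have "r xstar \<noteq> -\<infinity>" using r_pcc by (simp add: proper_closed_convex_def)
  ultimately show ?thesis by (cases "r xstar") auto
qed

lemma gap_eq:
  assumes "1 \<le> j"
  shows "gap j = f (x j) + real_of_ereal (r (x j)) - (f xstar + real_of_ereal (r xstar))"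
proof -
  obtain a b where "r (x j) = ereal a" "r xstar = ereal b"
    using r_iterate_finite[OF assms] r_minimizer_finite by blast
  thus ?thesis by (simp add: gap_def)
qed

lemma quadratic_growth:
  assumes "1 \<le> j"
  shows "\<mu> / 2 * norm (x j - xstar) ^ 2 \<le> gap j"
  using strongly_convex_composite_growth[OF f_strongly_convex r_pcc xstar_min
      r_minimizer_finite r_iterate_finite[OF assms]] gap_eq[OF assms] by simp

lemma gap_nonneg: "1 \<le> j \<Longrightarrow> 0 \<le> gap j"
  using quadratic_growth[of j] mu_pos by (meson order.trans zero_le_power2 mult_nonneg_nonneg
      less_imp_le half_gt_zero)

lemma step_sq_le_gap:
  assumes "1 \<le> j"
  shows "norm (x (Suc j) - x j) ^ 2 \<le> 4 / \<mu> * (gap j + gap (Suc j))"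
proof -
  have "norm (x (Suc j) - x j) ^ 2 \<le> (norm (x (Suc j) - xstar) + norm (x j - xstar)) ^ 2"
    by (intro power_mono norm_diff_triangle_le[of _ xstar]) (auto simp: norm_minus_commute)
  also have "\<dots> \<le> 2 * norm (x (Suc j) - xstar) ^ 2 + 2 * norm (x j - xstar) ^ 2"
    by (rule square_sum_le)
  also have "\<dots> = 4 / \<mu> * (\<mu> / 2 * norm (x (Suc j) - xstar) ^ 2 + \<mu> / 2 * norm (x j - xstar) ^ 2)"
    using mu_pos by (simp add: field_simps)
  also have "\<dots> \<le> 4 / \<mu> * (gap j + gap (Suc j))"
    using quadratic_growth[OF assms] quadratic_growth[of "Suc j"] mu_pos
    by (intro mult_left_mono) auto
  finally show ?thesis .
qed

lemma recent_path_sq_le: "recent_path j ^ 2 \<le> real K * window_energy 1 j"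
proof -
  have "recent_path j ^ 2 \<le> window_energy 1 j * real (card {j-K..<j})"
    using sum_squared_le_sum_of_squares[of "\<lambda>l. norm (x (Suc l) - x l)" "{j-K..<j}"]
    unfolding recent_path_def window_energy_def by simp
  also have "\<dots> \<le> window_energy 1 j * real K"
    unfolding window_energy_def by (intro mult_left_mono) (auto simp: sum_nonneg)
  finally show ?thesis by (simp add: mult.commute)
qed

lemma recent_path_mult_step_le:
  "recent_path j * norm (x (Suc j) - x j)
     \<le> real K / 2 * norm (x (Suc j) - x j) ^ 2 + window_energy 1 j / 2"
proof (cases "K = 0")
  case True thus ?thesis unfolding recent_path_def window_energy_def by simp
next
  case False
  define s where "s = norm (x (Suc j) - x j)"
  have "0 \<le> (real K * s - recent_path j)^2" by simp
  hence "real K * (2 * (recent_path j * s)) \<le> real K ^ 2 * s ^ 2 + recent_path j ^ 2"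
    by (simp add: power2_eq_square algebra_simps)
  also have "\<dots> \<le> real K * (real K * s ^ 2 + window_energy 1 j)"
    using recent_path_sq_le[of j] by (simp add: power2_eq_square algebra_simps)
  finally show ?thesis using False by (simp add: s_def)
qed

lemma sufficient_decrease:
  assumes "1 \<le> j"
  shows "norm (x (Suc j) - x j) ^ 2 / (2 * \<eta>) - L / 2 * window_energy 1 j \<le> gap j - gap (Suc j)"
proof -
  define e where "e = x (Suc j) - x j"
  define E where "E = norm e ^ 2"
  let ?rp = "real_of_ereal (r (x (Suc j)))" and ?rx = "real_of_ereal (r (x j))"
  have "r (x j) \<noteq> \<infinity>" by (subst r_iterate_finite[OF assms]) simp
  hence "\<eta> * (?rp - ?rx) \<le> (x (Suc j) - (x j - \<eta> *\<^sub>R g j)) \<bullet> (x j - x (Suc j))"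
    by (rule is_prox_variational_ineq[OF r_pcc eta_pos prox_step])
  also have "x (Suc j) - (x j - \<eta> *\<^sub>R g j) = e + \<eta> *\<^sub>R g j" by (simp add: e_def)
  also have "x j - x (Suc j) = - e" by (simp add: e_def)
  finally have "\<eta> * (?rp - ?rx) \<le> (e + \<eta> *\<^sub>R g j) \<bullet> (- e)" .
  hence prox: "?rp - ?rx + g j \<bullet> e \<le> - (E / \<eta>)"
    using eta_pos
    by (simp add: E_def power2_norm_eq_inner inner_add_left inner_add_right inner_commute field_simps)
  have smooth: "f (x (Suc j)) \<le> f (x j) + G (x j) \<bullet> e + L / 2 * E"
    using lipschitz_gradient_upper_bound[OF f_deriv G_lipschitz] by (simp add: e_def E_def)
  have "(G (x j) - g j) \<bullet> e \<le> norm (g j - G (x j)) * norm e"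
    using norm_cauchy_schwarz[of "G (x j) - g j" e] by (simp add: norm_minus_commute)
  also have "\<dots> \<le> L * recent_path j * norm e"
    using delayed_gradient_error[of j "x j"] by (intro mult_right_mono) (auto simp: recent_path_def)
  also have "\<dots> \<le> L * (real K / 2 * E + window_energy 1 j / 2)"
    using recent_path_mult_step_le[of j] L_nonneg
    by (simp add: mult.assoc e_def E_def mult_left_mono)
  finally have delay: "G (x j) \<bullet> e - g j \<bullet> e \<le> L * real K / 2 * E + L / 2 * window_energy 1 j"
    by (simp add: inner_diff_left algebra_simps)
  have "E * (\<eta> * L * (real K + 1)) \<le> E" using step_size by (simp add: E_def mult_left_le)
  hence "L / 2 * E + L * real K / 2 * E \<le> E / \<eta> - E / (2 * \<eta>)"
    using eta_pos by (simp add: field_simps)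
  thus ?thesis using prox smooth delay gap_eq[OF assms] gap_eq[of "Suc j"]
    by (simp add: E_def e_def)
qed

text \<open>The residual is a subgradient of f + r at x (Suc j): the proximal step contributes
  (x j - \<eta> g j - x (Suc j)) / \<eta> \<in> \<partial>r (x (Suc j)).\<close>
definition residual :: "nat \<Rightarrow> 'a" where
  "residual j = (1/\<eta>) *\<^sub>R (x (Suc j) - (x j - \<eta> *\<^sub>R g j)) - G (x (Suc j))"

lemma gap_le_residual_sq: "gap (Suc j) \<le> norm (residual j) ^ 2 / (2 * \<mu>)"
proof -
  define p where "p = x (Suc j)"
  define w where "w = xstar - p"
  define s where "s = residual j"
  have "\<eta> * (real_of_ereal (r p) - real_of_ereal (r xstar)) \<le> (p - (x j - \<eta> *\<^sub>R g j)) \<bullet> w"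
    unfolding p_def w_def
    by (rule is_prox_variational_ineq[OF r_pcc eta_pos prox_step], subst r_minimizer_finite) simp
  hence "real_of_ereal (r p) - real_of_ereal (r xstar) \<le> (1/\<eta>) * ((p - (x j - \<eta> *\<^sub>R g j)) \<bullet> w)"
    using eta_pos by (simp add: field_simps)
  moreover have "f p + G p \<bullet> w + \<mu> / 2 * norm w ^ 2 \<le> f xstar"
    using strongly_convex_gradient_ineq[OF f_strongly_convex f_deriv G_lipschitz] by (simp add: w_def)
  ultimately have "gap (Suc j) \<le> s \<bullet> w - \<mu> / 2 * norm w ^ 2"
    using gap_eq[of "Suc j"] by (simp add: s_def residual_def p_def inner_diff_left)
  also have "\<dots> \<le> norm s * norm w - \<mu> / 2 * norm w ^ 2"
    using norm_cauchy_schwarz[of s w] by simp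
  also have "\<dots> \<le> norm s ^ 2 / (2 * \<mu>)"
  proof -
    have "0 \<le> (norm s - \<mu> * norm w)^2" by simp
    thus ?thesis using mu_pos by (simp add: field_simps power2_eq_square)
  qed
  finally show ?thesis by (simp add: s_def)
qed

lemma residual_sq_le:
  "norm (residual j) ^ 2
     \<le> 8 / \<eta>^2 * norm (x (Suc j) - x j) ^ 2 + 2 * L^2 * (real K * window_energy 1 j)"
proof -
  define p where "p = x (Suc j)"
  define e where "e = p - x j"
  define s where "s = residual j"
  have "norm (g j - G p) \<le> L * (recent_path j + norm e)"
    using delayed_gradient_error[of j p] by (simp add: recent_path_def e_def norm_minus_commute)
  moreover have "s = (1/\<eta>) *\<^sub>R e + (g j - G p)"
    using eta_pos by (simp add: s_def residual_def p_def e_def scaleR_diff_right algebra_simps)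
  hence "norm s \<le> norm e / \<eta> + norm (g j - G p)"
    using eta_pos norm_triangle_ineq[of "(1/\<eta>) *\<^sub>R e" "g j - G p"] by simp
  moreover have "L * norm e \<le> 1 / \<eta> * norm e"
    using eta_L_le_1 eta_pos by (intro mult_right_mono) (auto simp: field_simps)
  moreover have "2 / \<eta> * norm e = norm e / \<eta> + 1 / \<eta> * norm e" by simp
  ultimately have "norm s \<le> 2 / \<eta> * norm e + L * recent_path j"
    by (simp only: distrib_left)
  hence "norm s ^ 2 \<le> (2 / \<eta> * norm e + L * recent_path j) ^ 2"
    by (intro power_mono) auto
  also have "\<dots> \<le> 8 / \<eta>^2 * norm e ^ 2 + 2 * L^2 * recent_path j ^ 2"
    using square_sum_le[of "2 / \<eta> * norm e" "L * recent_path j"]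
    by (simp add: power_mult_distrib power_divide)
  also have "\<dots> \<le> 8 / \<eta>^2 * norm e ^ 2 + 2 * L^2 * (real K * window_energy 1 j)"
    using recent_path_sq_le[of j] by (intro add_left_mono mult_left_mono) auto
  finally show ?thesis by (simp add: s_def e_def p_def)
qed

lemma gap_contraction:
  assumes "1 \<le> j"
  shows "(1 + \<eta> * \<mu> / 8) * gap (Suc j) \<le> gap j + L * window_energy 1 j"
proof -
  define E where "E = norm (x (Suc j) - x j) ^ 2"
  have W: "0 \<le> window_energy 1 j" by (simp add: window_energy_def sum_nonneg)
  have "\<eta> * \<mu> / 8 * gap (Suc j) \<le> \<eta> * \<mu> / 8 * (norm (residual j) ^ 2 / (2 * \<mu>))"
    using gap_le_residual_sq eta_pos mu_pos by (intro mult_left_mono) auto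
  also have "\<dots> = \<eta> / 16 * norm (residual j) ^ 2" using mu_pos by (simp add: field_simps)
  also have "\<dots> \<le> \<eta> / 16 * (8 / \<eta>^2 * E + 2 * L^2 * (real K * window_energy 1 j))"
    using residual_sq_le eta_pos unfolding E_def by (intro mult_left_mono) auto
  also have "\<dots> = E / (2 * \<eta>) + (\<eta> * real K * L) * (L * window_energy 1 j) / 8"
    using eta_pos by (simp add: field_simps power2_eq_square)
  also have "\<dots> \<le> E / (2 * \<eta>) + L * window_energy 1 j / 8"
    using eta_K_L_le_1 eta_pos L_nonneg W
    by (intro add_left_mono divide_right_mono mult_left_le_one_le) auto
  finally have "\<eta> * \<mu> / 8 * gap (Suc j) \<le> E / (2 * \<eta>) + L * window_energy 1 j / 8" .
  moreover have "0 \<le> L * window_energy 1 j" using L_nonneg W by simp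
  ultimately show ?thesis
    using sufficient_decrease[OF assms] unfolding E_def by (simp add: distrib_right)
qed

lemma weight_nonneg: "0 \<le> weight i"
  using eta_pos L_nonneg by (simp add: weight_def)

lemma window_decrease:
  assumes "1 \<le> k - n * K"
  shows "window_energy n k / (2 * \<eta>) - L * real K / 2 * window_energy (Suc n) k
           \<le> gap (k - n * K) - gap k"
proof -
  define S where "S = (\<Sum>j\<in>{k - n*K..<k}. window_energy 1 j)"
  have "window_energy n k / (2 * \<eta>) - L / 2 * S
      = (\<Sum>j\<in>{k - n*K..<k}. norm (x (Suc j) - x j) ^ 2 / (2 * \<eta>) - L / 2 * window_energy 1 j)"
    by (simp add: S_def window_energy_def sum_subtractf sum_divide_distrib sum_distrib_left)
  also have "\<dots> \<le> (\<Sum>j\<in>{k - n*K..<k}. gap j - gap (Suc j))"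
    by (rule sum_mono, rule sufficient_decrease) (use assms in auto)
  also have "\<dots> = gap (k - n * K) - gap k"
    using sum_Suc_diff'[of "k - n*K" k gap] by (simp add: sum_subtractf)
  finally have decrease: "window_energy n k / (2 * \<eta>) - L / 2 * S \<le> gap (k - n * K) - gap k" .
  have "S \<le> real K * (\<Sum>l\<in>{k - n*K - K..<k}. norm (x (Suc l) - x l) ^ 2)"
    using sum_sliding_window_le[where E="\<lambda>l. norm (x (Suc l) - x l) ^ 2" and p="k - n*K" and q=k]
    unfolding S_def window_energy_def by simp
  also have "k - n*K - K = k - Suc n * K" by simp
  finally have "L / 2 * S \<le> L / 2 * (real K * window_energy (Suc n) k)"
    using L_nonneg by (intro mult_left_mono) (auto simp: window_energy_def)
  with decrease show ?thesis by simp
qed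

text \<open>Weighting the window estimates by the geometric weights makes the energies of
  consecutive windows cancel, leaving only the largest window.\<close>
lemma weighted_window_decrease:
  assumes "1 \<le> a" "(a - 1) * K < k"
  shows "L * window_energy 1 k
           \<le> (\<Sum>i\<in>{1..a-1}. weight i * (gap (k - i*K) - gap k)) + weight a / (2*\<eta>) * window_energy a k"
proof -
  define u where "u i = weight i / (2*\<eta>) * window_energy i k" for i
  have "u i - u (Suc i) \<le> weight i * (gap (k - i*K) - gap k)" if i: "i \<in> {1..a-1}" for i
  proof -
    have "i * K \<le> (a - 1) * K" using i by simp
    hence window: "1 \<le> k - i * K" using assms by linarith
    have "weight (Suc i) = \<eta> * real K * L * weight i"
      using i by (cases i) (simp_all add: weight_def algebra_simps)
    hence "u i - u (Suc i)
        = weight i * (window_energy i k / (2*\<eta>) - L * real K / 2 * window_energy (Suc i) k)"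
      using eta_pos by (simp add: u_def field_simps)
    also have "\<dots> \<le> weight i * (gap (k - i*K) - gap k)"
      using window_decrease[OF window] weight_nonneg[of i] by (rule mult_left_mono)
    finally show ?thesis .
  qed
  hence "(\<Sum>i\<in>{1..a-1}. u i - u (Suc i)) \<le> (\<Sum>i\<in>{1..a-1}. weight i * (gap (k - i*K) - gap k))"
    by (rule sum_mono)
  moreover have "(\<Sum>i\<in>{1..a-1}. u i - u (Suc i)) = u 1 - u a"
  proof -
    have "{1..a-1} = {1..<a}" using assms by auto
    thus ?thesis using sum_Suc_diff'[of 1 a u] assms by (simp add: sum_subtractf)
  qed
  moreover have "u 1 = L * window_energy 1 k" using eta_pos by (simp add: u_def weight_def)
  ultimately show ?thesis by (simp add: u_def)
qed

lemma window_energy_le_gap_sum: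
  assumes "1 \<le> k - n * K"
  shows "window_energy n k \<le> 8 / \<mu> * (\<Sum>j\<in>{k - n*K..k}. gap j)"
proof -
  have "window_energy n k \<le> (\<Sum>l\<in>{k - n*K..<k}. 4 / \<mu> * (gap l + gap (Suc l)))"
    unfolding window_energy_def by (rule sum_mono, rule step_sq_le_gap) (use assms in auto)
  also have "\<dots> = 4 / \<mu> * ((\<Sum>l\<in>{k - n*K..<k}. gap l) + (\<Sum>l\<in>{k - n*K..<k}. gap (Suc l)))"
    by (simp only: sum.distrib[symmetric] sum_distrib_left)
  also have "\<dots> \<le> 4 / \<mu> * ((\<Sum>j\<in>{k - n*K..k}. gap j) + (\<Sum>j\<in>{k - n*K..k}. gap j))"
  proof -
    have "(\<Sum>l\<in>{k - n*K..<k}. gap l) \<le> (\<Sum>j\<in>{k - n*K..k}. gap j)"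
      by (rule sum_mono2) (use gap_nonneg assms in auto)
    moreover have "(\<Sum>l\<in>{k - n*K..<k}. gap (Suc l)) \<le> (\<Sum>j\<in>{k - n*K..k}. gap j)"
      unfolding sum.shift_bounds_Suc_ivl[symmetric] by (rule sum_mono2) (use gap_nonneg assms in auto)
    ultimately show ?thesis using mu_pos by (intro mult_left_mono) auto
  qed
  finally show ?thesis by simp
qed

theorem delayed_linear_rate:
  assumes "2 \<le> a" "a * K + 1 \<le> k"
  shows "(1 + \<eta> * \<mu> / 8) * gap (Suc k)
    \<le> (1 - (\<Sum>i\<in>{1..a-1}. weight i)) * gap k + (\<Sum>i\<in>{1..a-1}. weight i * gap (k - i * K))
      + 4 * real K * (L / \<mu>) * weight (a - 1) * (\<Sum>j\<in>{k - a * K..k}. gap j)"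
proof -
  obtain b where a: "a = Suc (Suc b)" using assms(1) by (metis add_2_eq_Suc le_Suc_ex)
  have "(a - 1) * K < k" using assms by (simp add: a algebra_simps)
  have "weight a / (2*\<eta>) * window_energy a k
      \<le> weight a / (2*\<eta>) * (8 / \<mu> * (\<Sum>j\<in>{k - a * K..k}. gap j))"
    using window_energy_le_gap_sum[of k a] assms weight_nonneg[of a] eta_pos
    by (intro mult_left_mono) auto
  also have "\<dots> = 4 * real K * (L / \<mu>) * weight (a - 1) * (\<Sum>j\<in>{k - a * K..k}. gap j)"
    using eta_pos mu_pos by (simp add: a weight_def field_simps)
  finally have largest_window: "weight a / (2*\<eta>) * window_energy a k
      \<le> 4 * real K * (L / \<mu>) * weight (a - 1) * (\<Sum>j\<in>{k - a * K..k}. gap j)" .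
  have "gap k + (\<Sum>i\<in>{1..a-1}. weight i * (gap (k - i*K) - gap k))
      = (1 - (\<Sum>i\<in>{1..a-1}. weight i)) * gap k + (\<Sum>i\<in>{1..a-1}. weight i * gap (k - i * K))"
    by (simp add: algebra_simps sum_subtractf sum_distrib_left)
  moreover have "(1 + \<eta> * \<mu> / 8) * gap (Suc k) \<le> gap k + L * window_energy 1 k"
    by (rule gap_contraction) (use assms in simp)
  ultimately show ?thesis
    using weighted_window_decrease[of a k] \<open>(a - 1) * K < k\<close> assms largest_window by linarith
qed

end

theorem corollary1:
  fixes m :: nat and fi :: "nat \<Rightarrow> 'a::euclidean_space \<Rightarrow> real"
    and gfi :: "nat \<Rightarrow> 'a \<Rightarrow> 'a" and Li :: "nat \<Rightarrow> real"
    and \<mu> :: real and r :: "'a \<Rightarrow> ereal" and xstar :: 'a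
    and K :: nat and \<eta> :: real and x :: "nat \<Rightarrow> 'a" and \<tau> :: "nat \<Rightarrow> nat \<Rightarrow> nat"
    and a :: nat and k :: nat
  defines "f \<equiv> \<lambda>y. (\<Sum>i\<in>{1..m}. fi i y) / real m"
    and "L \<equiv> (\<Sum>i\<in>{1..m}. Li i) / real m"
    and "F \<equiv> \<lambda>y. ereal ((\<Sum>i\<in>{1..m}. fi i y) / real m) + r y"
    and "Q \<equiv> ((\<Sum>i\<in>{1..m}. Li i) / real m) / \<mu>"
    and "\<epsilon> \<equiv> \<lambda>i::nat. 2 * \<eta> * ((\<Sum>i\<in>{1..m}. Li i) / real m) * (\<eta> * real K * ((\<Sum>i\<in>{1..m}. Li i) / real m)) ^ (i - 1)"
  assumes m_pos: "m \<ge> 1"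
    and grad: "\<And>i y. i \<in> {1..m} \<Longrightarrow> (fi i has_derivative (\<lambda>h. gfi i y \<bullet> h)) (at y)"
    and grad_cont: "\<And>i. i \<in> {1..m} \<Longrightarrow> continuous_on UNIV (gfi i)"
    and Li_nonneg: "\<And>i. i \<in> {1..m} \<Longrightarrow> Li i \<ge> 0"
    and lip: "\<And>i y z. i \<in> {1..m} \<Longrightarrow> norm (gfi i y - gfi i z) \<le> Li i * norm (y - z)"
    and mu_pos: "\<mu> > 0"
    and strong: "convex_on UNIV (\<lambda>y. f y - \<mu> / 2 * norm y ^ 2)"
    and r_pcc: "proper_closed_convex r"
    and xstar_min: "\<And>y. F xstar \<le> F y"
    and tau: "\<And>i j. i \<in> {1..m} \<Longrightarrow> j - K \<le> \<tau> i j \<and> \<tau> i j \<le> j"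
    and iter: "\<And>j. is_prox r \<eta> (x j - \<eta> *\<^sub>R ((\<Sum>i\<in>{1..m}. gfi i (x (\<tau> i j))) /\<^sub>R real m)) (x (Suc j))"
    and eta_pos: "\<eta> > 0"
    and eta_le: "\<eta> \<le> 1 / (L * (real K + 1))"
    and a_ge: "a \<ge> 2"
    and k_ge: "k \<ge> a * K + 1"
  shows "(1 + \<eta> * \<mu> / 8) * real_of_ereal (F (x (Suc k)) - F xstar)
    \<le> (1 - (\<Sum>i\<in>{1..a-1}. \<epsilon> i)) * real_of_ereal (F (x k) - F xstar) + (\<Sum>i\<in>{1..a-1}. \<epsilon> i * real_of_ereal (F (x (k - i * K)) - F xstar))
      + 4 * real K * Q * \<epsilon> (a - 1) * (\<Sum>j\<in>{k - a * K..k}. real_of_ereal (F (x j) - F xstar))"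
proof -
  have L_nonneg: "0 \<le> L"
    unfolding L_def using Li_nonneg by (intro divide_nonneg_nonneg sum_nonneg) auto
  have step_size: "\<eta> * L * (real K + 1) \<le> 1"
  proof (cases "L = 0")
    case False
    hence "0 < L * (real K + 1)" using L_nonneg by simp
    thus ?thesis using eta_le by (simp add: field_simps)
  qed simp
  have card: "card {1..m} = m" by simp
  interpret piag f "\<lambda>y. (\<Sum>i\<in>{1..m}. gfi i y) /\<^sub>R real m" L \<mu> r xstar K \<eta> x
    "\<lambda>j. (\<Sum>i\<in>{1..m}. gfi i (x (\<tau> i j))) /\<^sub>R real m"
  proof
    show "(f has_derivative (\<lambda>h. ((\<Sum>i\<in>{1..m}. gfi i y) /\<^sub>R real m) \<bullet> h)) (at y)" for y
      using has_derivative_average[of "{1..m}" fi "\<lambda>i. gfi i y" y] grad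
      unfolding f_def card by simp
    show "norm ((\<Sum>i\<in>{1..m}. gfi i y) /\<^sub>R real m - (\<Sum>i\<in>{1..m}. gfi i z) /\<^sub>R real m)
            \<le> L * norm (y - z)" for y z
      using norm_average_diff_le[of "{1..m}" "\<lambda>i. gfi i y" "\<lambda>i. gfi i z" Li "norm (y - z)"] lip
      unfolding card L_def by simp
    show "norm ((\<Sum>i\<in>{1..m}. gfi i (x (\<tau> i j))) /\<^sub>R real m - (\<Sum>i\<in>{1..m}. gfi i u) /\<^sub>R real m)
            \<le> L * ((\<Sum>l\<in>{j-K..<j}. norm (x (Suc l) - x l)) + norm (x j - u))" for j u
      using norm_delayed_average_diff_le[where I="{1..m}" and \<tau>="\<lambda>i. \<tau> i j" and j=j and u=u,
          OF lip Li_nonneg tau]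
      unfolding card L_def by simp
  qed (use strong mu_pos r_pcc iter eta_pos step_size L_nonneg xstar_min in
       \<open>simp_all add: F_def f_def\<close>)
  have "\<And>j. real_of_ereal (F (x j) - F xstar) = gap j" unfolding gap_def by (simp add: F_def f_def)
  moreover have "\<epsilon> = weight" unfolding weight_def by (simp add: fun_eq_iff \<epsilon>_def L_def)
  moreover have "Q = L / \<mu>" by (simp add: Q_def L_def)
  ultimately show ?thesis using delayed_linear_rate[OF a_ge k_ge] by simp
qed

end
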